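(* Let $T\ge1$ and $0<\eta\le\frac{1}{5\sqrt T}$, and suppose $d:=\max\{25\eta^2T^2,1\}$ is a positive integer. Define $f:\mathbb R^d\to\mathbb R$ by $$f(w)=\max\Big\{0,\ \max_{i\in[d]}\Big(\frac{1}{\sqrt d}-w[i]-\frac{\eta i}{4d}\Big)\Big\},$$ where $w[i]$ is the $i$-th coordinate of $w$. Consider unprojected GD $w_1=0$, $w_{t+1}=w_t-\eta\nabla f(w_t)$, $1\le t<T$. Then for every $t\in[T]$: (i) $w_t[i]\le\frac{1}{2\sqrt d}$ for all $i\in[d]$; (ii) there is an index $j_t\in[d]$ such that for all $k\ne j_t$, $\frac{1}{\sqrt d}-w_t[j_t]-\frac{\eta j_t}{4d}>\frac{1}{\sqrt d}-w_t[k]-\frac{\eta k}{4d}+\frac{\eta}{8d}$; (iii) $\frac{1}{\sqrt d}-w_t[j_t]-\frac{\eta j_t}{4d}>\frac{\eta}{8d}$. In particular $f$ is differentiable at each $w_t$ with $\nabla f(w_t)=-e_{j_t}$, so the iterates are well defined.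
   Context: $e_j$ denotes the $j$-th standard basis vector of $\mathbb R^d$. *)

theory Defs
  imports "HOL-Analysis.Analysis"
begin

text \<open>Vectors of R^d are rendered as \<open>real ^ 'n\<close> with \<open>CARD('n) = d\<close>;
  the coordinate labels 1..d are given by a bijection \<open>idx :: 'n \<Rightarrow> nat\<close>
  onto \<open>{1..d}\<close>, so that \<open>w $ k\<close> is the coordinate \<open>w[idx k]\<close>.\<close>

definition hard_f :: "real \<Rightarrow> nat \<Rightarrow> ('n::finite \<Rightarrow> nat) \<Rightarrow> real ^ 'n \<Rightarrow> real" where
  "hard_f \<eta> d idx w =
     max 0 (Max ((\<lambda>i. 1 / sqrt (real d) - w $ i - \<eta> * real (idx i) / (4 * real d)) ` UNIV))"

definition grad :: "('a::euclidean_space \<Rightarrow> real) \<Rightarrow> 'a \<Rightarrow> 'a" where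
  "grad f w = (THE g. (f has_derivative (\<lambda>h. g \<bullet> h)) (at w))"

text \<open>Unprojected gradient descent: \<open>gd f \<eta> n\<close> is the iterate w_{n+1}, so w_1 = 0.\<close>
fun gd :: "('a::euclidean_space \<Rightarrow> real) \<Rightarrow> real \<Rightarrow> nat \<Rightarrow> 'a" where
  "gd f \<eta> 0 = 0"
| "gd f \<eta> (Suc n) = gd f \<eta> n - \<eta> *\<^sub>R grad f (gd f \<eta> n)"

end

theory Submission
  imports Defs
begin

text \<open>Gradient descent on this f walks through the coordinates cyclically in the order of their
  labels: at w_{n+1} the active piece is the one with label n mod d + 1, so the step raises that
  coordinate by \<eta>. Hence w_{n+1} has every coordinate equal to \<eta> (n div d), plus \<eta> for the labels
  \<open>\<le> n mod d\<close>. On this explicit trajectory the margins are compared directly: the label offsets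
  \<eta> i / (4d) leave a gap of at least \<eta>/(8d) in favour of the next label, while the step-size
  condition keeps \<eta> T, and hence every coordinate, below a fraction of \<open>\<surd>d\<close>, so
  the active margin stays positive and the maximum is attained at a single non-degenerate piece.\<close>

lemma has_derivative_max0_Max_at_strict_argmax:
  fixes c :: "'n::finite \<Rightarrow> real" and w :: "real^'n" and \<delta> :: real
  assumes "\<delta> > 0"
    and gap: "\<And>k. k \<noteq> j \<Longrightarrow> c j - w$j > c k - w$k + \<delta>"
    and pos: "c j - w$j > \<delta>"
  shows "((\<lambda>x. max 0 (Max ((\<lambda>i. c i - x$i) ` UNIV))) has_derivative (\<lambda>h. (- axis j 1) \<bullet> h)) (at w)"
proof -
  have near: "max 0 (Max ((\<lambda>i. c i - x$i) ` UNIV)) = (- axis j 1) \<bullet> x + c j"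
    if "x \<in> ball w (\<delta>/2)" for x
  proof -
    have close: "\<bar>x$k - w$k\<bar> < \<delta>/2" for k
      using that component_le_norm_cart[of "x - w" k] by (auto simp: dist_norm norm_minus_commute)
    have "Max ((\<lambda>i. c i - x$i) ` UNIV) = c j - x$j"
    proof (rule Max_eqI)
      fix y assume "y \<in> (\<lambda>i. c i - x$i) ` UNIV"
      then obtain k where "y = c k - x$k" by auto
      then show "y \<le> c j - x$j"
        using gap[of k] close[of k] close[of j] unfolding abs_less_iff by (cases "k = j") auto
    qed auto
    moreover have "c j - x$j > 0" using pos close[of j] unfolding abs_less_iff by linarith
    ultimately show ?thesis by (simp add: inner_axis')
  qed
  have "((\<lambda>x. (- axis j 1) \<bullet> x + c j) has_derivative (\<lambda>h. (- axis j 1) \<bullet> h)) (at w)"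
    by (auto intro!: derivative_eq_intros)
  then show ?thesis
    by (rule has_derivative_transform_within_open[OF _ open_ball[of w "\<delta>/2"]]) (use \<open>\<delta> > 0\<close> near in auto)
qed

lemma grad_eqI:
  fixes f :: "'a::euclidean_space \<Rightarrow> real"
  assumes "(f has_derivative (\<lambda>h. g \<bullet> h)) (at w)"
  shows "grad f w = g"
  unfolding grad_def
proof (rule the_equality)
  fix g' assume "(f has_derivative (\<lambda>h. g' \<bullet> h)) (at w)"
  from has_derivative_unique[OF this assms] have "g' \<bullet> (g' - g) = g \<bullet> (g' - g)"
    by metis
  then show "g' = g"
    by (metis inner_diff_left inner_eq_zero_iff eq_iff_diff_eq_0)
qed (rule assms)

locale hard_gd_instance =
  fixes T d :: nat and \<eta> :: real and idx :: "'n::finite \<Rightarrow> nat"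
  assumes T_ge_1: "T \<ge> 1"
    and eta_pos: "0 < \<eta>" and eta_le: "\<eta> \<le> 1 / (5 * sqrt (real T))"
    and d_eq: "real d = max (25 * \<eta>^2 * (real T)^2) 1"
    and idx_bij: "bij_betw idx UNIV {1..d}"
begin

abbreviation margin :: "real^'n \<Rightarrow> 'n \<Rightarrow> real" where
  "margin w i \<equiv> 1 / sqrt (real d) - w $ i - \<eta> * real (idx i) / (4 * real d)"

lemma d_ge_1: "real d \<ge> 1"
  using d_eq by linarith

lemma d_le_T: "real d \<le> real T"
proof -
  have T: "real T \<ge> 1" using T_ge_1 by simp
  have "5 * \<eta> * sqrt (real T) \<le> 1"
    using eta_le T by (simp add: field_simps)
  then have "(5 * \<eta> * sqrt (real T))^2 \<le> 1"
    using eta_pos by (intro power_le_one) auto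
  then have "25 * \<eta>^2 * real T \<le> 1"
    using T by (simp add: power_mult_distrib)
  then have "25 * \<eta>^2 * (real T)^2 \<le> real T"
    using T mult_right_mono[of "25 * \<eta>^2 * real T" 1 "real T"] by (simp add: power2_eq_square)
  then show ?thesis
    using d_eq T by linarith
qed

lemma eta_sqrt_d_le: "5 * \<eta> * sqrt (real d) \<le> 1"
proof -
  have "5 * \<eta> * sqrt (real d) \<le> 5 * \<eta> * sqrt (real T)"
    using d_le_T eta_pos by simp
  also have "\<dots> \<le> 1"
    using eta_le T_ge_1 by (simp add: field_simps)
  finally show ?thesis .
qed

lemma eta_T_le: "5 * \<eta> * real T \<le> sqrt (real d)"
  using d_eq eta_pos real_le_rsqrt[of "5 * \<eta> * real T" "real d"] by (simp add: power_mult_distrib)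

definition cyclic_iterate :: "nat \<Rightarrow> real^'n" where
  "cyclic_iterate n = (\<chi> i. \<eta> * (real (n div d) + (if idx i \<le> n mod d then 1 else 0)))"

definition active_coord :: "nat \<Rightarrow> 'n" where
  "active_coord n = inv_into UNIV idx (n mod d + 1)"

lemma idx_ge_1: "1 \<le> idx i" and idx_le_d: "idx i \<le> d"
  using idx_bij by (auto simp: bij_betw_def)

lemma idx_eq_iff: "idx i = idx k \<longleftrightarrow> i = k"
  using idx_bij by (auto simp: bij_betw_def inj_eq)

lemma idx_active_coord: "idx (active_coord n) = n mod d + 1"
proof -
  have "n mod d + 1 \<in> idx ` UNIV"
    using idx_bij d_ge_1 by (auto simp: bij_betw_def Suc_le_eq)
  then show ?thesis
    unfolding active_coord_def by (rule f_inv_into_f)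
qed

lemma cyclic_iterate_nth:
  "cyclic_iterate n $ i = \<eta> * real (n div d) + (if idx i \<le> n mod d then \<eta> else 0)"
  by (simp add: cyclic_iterate_def algebra_simps)

lemma cyclic_iterate_active_coord: "cyclic_iterate n $ active_coord n = \<eta> * real (n div d)"
  by (simp add: cyclic_iterate_nth idx_active_coord)

lemma sweep_budget:
  assumes "n < T"
  shows "\<eta> * real (n div d) * real d + \<eta> * real (n mod d + 1) \<le> sqrt (real d) / 5"
proof -
  have "n div d * d + (n mod d + 1) \<le> T"
    using assms by simp
  then have "real (n div d) * real d + real (n mod d + 1) \<le> real T"
    by (metis of_nat_add of_nat_le_iff of_nat_mult)
  then have "\<eta> * (real (n div d) * real d + real (n mod d + 1)) \<le> \<eta> * real T"
    using eta_pos by (intro mult_left_mono) auto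
  then show ?thesis
    using eta_T_le by (simp add: algebra_simps)
qed

lemma eta_div_le:
  assumes "n < T"
  shows "\<eta> * real (n div d) * sqrt (real d) \<le> 1 / 5"
proof -
  define s where "s = sqrt (real d)"
  have s: "s > 0" "s * s = real d"
    using d_ge_1 by (auto simp: s_def)
  have "0 \<le> \<eta> * real (n mod d + 1)"
    using eta_pos by simp
  then have "\<eta> * real (n div d) * real d \<le> s / 5"
    using sweep_budget[OF assms] unfolding s_def by linarith
  then have "(\<eta> * real (n div d) * s) * s \<le> (1 / 5) * s"
    by (simp add: mult.assoc flip: s(2))
  then show ?thesis
    using s(1) by (simp add: s_def)
qed

lemma cyclic_iterate_le:
  assumes "n < T"
  shows "cyclic_iterate n $ i \<le> 1 / (2 * sqrt (real d))"
proof -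
  have "cyclic_iterate n $ i \<le> \<eta> * real (n div d) + \<eta>"
    using eta_pos by (simp add: cyclic_iterate_nth)
  then have "cyclic_iterate n $ i * sqrt (real d) \<le> (\<eta> * real (n div d) + \<eta>) * sqrt (real d)"
    by (rule mult_right_mono) simp
  also have "\<dots> \<le> 2 / 5"
    using eta_div_le[OF assms] eta_sqrt_d_le by (simp add: algebra_simps)
  finally show ?thesis
    using d_ge_1 by (simp add: field_simps)
qed

lemma active_coord_margin_gap:
  assumes "k \<noteq> active_coord n"
  shows "margin (cyclic_iterate n) (active_coord n) > margin (cyclic_iterate n) k + \<eta> / (8 * real d)"
proof -
  define j where "j = active_coord n"
  have "cyclic_iterate n $ k - cyclic_iterate n $ j
          + \<eta> * (real (idx k) - real (idx j)) / (4 * real d) > \<eta> / (8 * real d)"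
  proof (cases "idx k \<le> n mod d")
    case True
    have "real (idx k) - real (idx j) \<ge> 1 - real d"
      using idx_ge_1[of k] idx_le_d[of j] by linarith
    then have "\<eta> * (real (idx k) - real (idx j)) \<ge> \<eta> * (1 - real d)"
      using eta_pos by (intro mult_left_mono) auto
    then have "\<eta> * (real (idx k) - real (idx j)) / (4 * real d) > - \<eta> / 4"
      using d_ge_1 eta_pos by (simp add: field_simps)
    moreover have "\<eta> / (8 * real d) \<le> \<eta> / 8"
      using d_ge_1 eta_pos by (simp add: field_simps)
    ultimately show ?thesis
      using True eta_pos by (simp add: cyclic_iterate_nth j_def idx_active_coord)
  next
    case False
    then have "real (idx k) \<ge> real (idx j) + 1"
      using assms idx_eq_iff[of k j] by (simp add: j_def idx_active_coord)
    then have "\<eta> * (real (idx k) - real (idx j)) \<ge> \<eta> * 1"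
      using eta_pos by (intro mult_left_mono) auto
    then have "\<eta> * (real (idx k) - real (idx j)) / (4 * real d) > \<eta> / (8 * real d)"
      using d_ge_1 eta_pos by (simp add: field_simps)
    then show ?thesis
      using False by (simp add: cyclic_iterate_nth j_def idx_active_coord)
  qed
  moreover have "margin (cyclic_iterate n) j - (margin (cyclic_iterate n) k + \<eta> / (8 * real d))
      = cyclic_iterate n $ k - cyclic_iterate n $ j
          + \<eta> * (real (idx k) - real (idx j)) / (4 * real d) - \<eta> / (8 * real d)"
    by (simp add: algebra_simps diff_divide_distrib)
  ultimately show ?thesis
    unfolding j_def by linarith
qed

lemma active_coord_margin_pos:
  assumes "n < T"
  shows "margin (cyclic_iterate n) (active_coord n) > \<eta> / (8 * real d)"
proof -
  define s where "s = sqrt (real d)"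
  have s: "s \<ge> 1" "s * s = real d"
    using d_ge_1 by (auto simp: s_def)
  have budget: "\<eta> * real (n div d) * real d + \<eta> * real (n mod d + 1) \<le> s / 5"
    using sweep_budget[OF assms] by (simp add: s_def)
  have "0 \<le> \<eta> * real (n mod d + 1)"
    using eta_pos by simp
  have "\<eta> \<le> \<eta> * s"
    using s eta_pos by simp
  moreover have "\<eta> * s \<le> 1 / 5"
    using eta_sqrt_d_le by (simp add: s_def)
  ultimately have "\<eta> / 8 < 4 * s / 5"
    using s by linarith
  also have "\<dots> \<le> s - \<eta> * real (n div d) * real d - \<eta> * real (n mod d + 1) / 4"
    using budget \<open>0 \<le> \<eta> * real (n mod d + 1)\<close> by linarith
  also have "\<dots> = real d * (1 / s) - real d * (\<eta> * real (n div d))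
                    - real d * (\<eta> * real (n mod d + 1) / (4 * real d))"
    using s d_ge_1 by (simp add: field_simps)
  also have "\<dots> = real d * margin (cyclic_iterate n) (active_coord n)"
    by (simp add: s_def cyclic_iterate_active_coord idx_active_coord algebra_simps)
  finally have "\<eta> < 8 * real d * margin (cyclic_iterate n) (active_coord n)"
    by linarith
  then show ?thesis
    using d_ge_1 by (simp add: pos_divide_less_eq mult.commute mult.left_commute)
qed

lemma hard_f_eq_max0_Max:
  "hard_f \<eta> d idx = (\<lambda>x. max 0 (Max ((\<lambda>i. (1 / sqrt (real d) - \<eta> * real (idx i) / (4 * real d)) - x $ i) ` UNIV)))"
  unfolding hard_f_def by (simp add: fun_eq_iff algebra_simps)

lemma hard_f_has_derivative_cyclic_iterate:
  assumes "n < T"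
  shows "(hard_f \<eta> d idx has_derivative (\<lambda>h. (- axis (active_coord n) 1) \<bullet> h)) (at (cyclic_iterate n))"
  unfolding hard_f_eq_max0_Max
proof (rule has_derivative_max0_Max_at_strict_argmax)
  show "0 < \<eta> / (8 * real d)"
    using eta_pos d_ge_1 by simp
qed (use active_coord_margin_gap active_coord_margin_pos[OF assms] in \<open>simp_all add: algebra_simps\<close>)

lemma cyclic_iterate_0: "cyclic_iterate 0 = 0"
proof -
  have "\<not> idx i \<le> 0" for i
    using idx_ge_1[of i] by linarith
  then show ?thesis
    by (simp add: cyclic_iterate_def vec_eq_iff)
qed

lemma cyclic_iterate_Suc: "cyclic_iterate (Suc n) = cyclic_iterate n + \<eta> *\<^sub>R axis (active_coord n) 1"
proof (subst vec_eq_iff, intro allI)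
  fix i
  have "i = active_coord n \<longleftrightarrow> idx i = n mod d + 1"
    using idx_eq_iff[of i "active_coord n"] by (simp add: idx_active_coord)
  then show "cyclic_iterate (Suc n) $ i = (cyclic_iterate n + \<eta> *\<^sub>R axis (active_coord n) 1) $ i"
    using idx_ge_1[of i] idx_le_d[of i]
    by (auto simp: cyclic_iterate_def axis_def div_Suc mod_Suc algebra_simps)
qed

lemma gd_eq_cyclic_iterate:
  assumes "n < T"
  shows "gd (hard_f \<eta> d idx) \<eta> n = cyclic_iterate n"
  using assms
proof (induction n)
  case 0
  show ?case by (simp add: cyclic_iterate_0)
next
  case (Suc n)
  then have "n < T" by simp
  then have "grad (hard_f \<eta> d idx) (cyclic_iterate n) = - axis (active_coord n) 1"
    by (intro grad_eqI hard_f_has_derivative_cyclic_iterate)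
  then show ?case
    using Suc.IH \<open>n < T\<close> by (simp add: cyclic_iterate_Suc)
qed

end

theorem mainTheorem12:
  fixes T d :: nat and \<eta> :: real and idx :: "'n::finite \<Rightarrow> nat"
  assumes "T \<ge> 1"
    and "0 < \<eta>" and "\<eta> \<le> 1 / (5 * sqrt (real T))"
    and "real d = max (25 * \<eta>^2 * (real T)^2) 1"
    and "CARD('n) = d"
    and "bij_betw idx UNIV {1..d}"
  shows "\<forall>t\<in>{1..T}.
     let w = gd (hard_f \<eta> d idx) \<eta> (t - 1) in
       (\<forall>i. w $ i \<le> 1 / (2 * sqrt (real d))) \<and>
       (\<exists>j. (\<forall>k. k \<noteq> j \<longrightarrow>
               1 / sqrt (real d) - w $ j - \<eta> * real (idx j) / (4 * real d)
               > 1 / sqrt (real d) - w $ k - \<eta> * real (idx k) / (4 * real d) + \<eta> / (8 * real d)) \<and>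
            1 / sqrt (real d) - w $ j - \<eta> * real (idx j) / (4 * real d) > \<eta> / (8 * real d) \<and>
            (hard_f \<eta> d idx has_derivative (\<lambda>h. (- axis j 1) \<bullet> h)) (at w) \<and>
            grad (hard_f \<eta> d idx) w = - axis j 1)"
proof -
  interpret hard_gd_instance T d \<eta> idx
    using assms by unfold_locales
  have "t - 1 < T" if "t \<in> {1..T}" for t
    using that by auto
  then show ?thesis
    unfolding Let_def
    using gd_eq_cyclic_iterate cyclic_iterate_le active_coord_margin_gap active_coord_margin_pos
      hard_f_has_derivative_cyclic_iterate grad_eqI[OF hard_f_has_derivative_cyclic_iterate]
    by metis
qed

end
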